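(* Let $b$ be a prime, $s,m\in\mathbb{N}$, and let $C_1^{(m)},\dots,C_s^{(m)}$ be the left upper $m\times m$ submatrices of the generating matrices of a digital $(t,s)$-sequence over $\mathbb{F}_b$, $m\ge t$. Let $0=w^r_1\le\dots\le w^r_s$ (row reduction indices) and $0=w^c_1\le\dots\le w^c_s$ (column reduction indices), and let $\widetilde{C}_j^{(m)}$ be obtained from $C_j^{(m)}$ by setting its last $\min(m,w^r_j)$ rows and its last $\min(m,w^c_j)$ columns to zero. Let $\widetilde{t}$ be the minimal quality parameter of the digital net generated by $\widetilde{C}_1^{(m)},\dots,\widetilde{C}_s^{(m)}$. Then \[ \max\{0,\,m-\max\{w^c_s+t,\,w^r_s\}\}\le\rho_m\big(\widetilde{C}_1^{(m)},\dots,\widetilde{C}_s^{(m)}\big)\le\max\{0,\,m-\max\{w^c_s,w^r_s\}\}, \] and $\widetilde{t}\le\min\{m,\max\{w^c_s+t,\,w^r_s\}\}$.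
   Context: A $(t,m,s)$-net in base $b$ is a set of $b^m$ points in $[0,1)^s$ such that every elementary interval $\prod_j[a_jb^{-d_j},(a_j+1)b^{-d_j})$ of volume $b^{t-m}$ contains exactly $b^t$ points. Digital net generated by $C_1^{(m)},\dots,C_s^{(m)}\in\mathbb{F}_b^{m\times m}$: points $\boldsymbol{x}_k$, $0\le k<b^m$, with $x_{k,j}=(C_j^{(m)}\vec{k})\cdot(b^{-1},\dots,b^{-m})$, $\vec k$ the base-$b$ digit vector of $k$, arithmetic over $\mathbb{F}_b\cong\{0,\dots,b-1\}$; its minimal quality parameter is the least $t$ for which it is a $(t,m,s)$-net. A digital $(t,s)$-sequence over $\mathbb{F}_b$ is generated by infinite matrices $C_1,\dots,C_s$ over $\mathbb{F}_b$ (point $k$: $x_{k,j}=(C_j\vec k)\cdot(b^{-1},b^{-2},\dots)$) such that for every $m'\ge t$ and $k\ge0$ the points with indices $kb^{m'},\dots,kb^{m'}+b^{m'}-1$ form a $(t,m',s)$-net. The linear independence parameter $\rho_m(C_1^{(m)},\dots,C_s^{(m)})$ is the largest $d$ such that for all $d_1,\dots,d_s\in\mathbb{N}_0$ with $\sum d_j=d$ the first $d_j$ rows of $C_j^{(m)}$, $1\le j\le s$, are jointly linearly independent over $\mathbb{F}_b$. *)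

theory Defs
  imports Complex_Main "HOL-Computational_Algebra.Primes"
begin

text \<open>F_b (b prime) is represented by the naturals 0..b-1 with arithmetic mod b.
  Coordinates and row/column indices are 0-based: coordinate j in 0..s-1 corresponds to the
  paper's j+1; row i (resp. column l) of a matrix corresponds to the paper's i+1 (l+1).
  A (possibly infinite) family of matrices is C :: nat => nat => nat => nat, C j i l = entry
  (row i, column l) of the j-th matrix.\<close>

definition digit :: "nat \<Rightarrow> nat \<Rightarrow> nat \<Rightarrow> nat" where
  "digit b k l = (k div b ^ l) mod b"

definition net_coord :: "nat \<Rightarrow> nat \<Rightarrow> (nat \<Rightarrow> nat \<Rightarrow> nat \<Rightarrow> nat) \<Rightarrow> nat \<Rightarrow> nat \<Rightarrow> real" where
  "net_coord b m C j k =
     (\<Sum>i<m. real ((\<Sum>l<m. C j i l * digit b k l) mod b) / real b ^ (i + 1))"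

text \<open>Coordinate j of point k of the digital sequence generated by the infinite matrices C j.
  The digit vector of k vanishes from position k on, so the i-th entry of C_j k is a finite sum.\<close>
definition seq_coord :: "nat \<Rightarrow> (nat \<Rightarrow> nat \<Rightarrow> nat \<Rightarrow> nat) \<Rightarrow> nat \<Rightarrow> nat \<Rightarrow> real" where
  "seq_coord b C j k =
     (\<Sum>i. real ((\<Sum>l<k. C j i l * digit b k l) mod b) / real b ^ (i + 1))"

definition is_net :: "nat \<Rightarrow> nat \<Rightarrow> nat \<Rightarrow> nat \<Rightarrow> (nat \<Rightarrow> nat \<Rightarrow> real) \<Rightarrow> bool" where
  "is_net b t m s X \<longleftrightarrow> t \<le> m \<and>
     (\<forall>d a :: nat \<Rightarrow> nat. (\<Sum>j<s. d j) = m - t \<longrightarrow> (\<forall>j<s. a j < b ^ d j) \<longrightarrow>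
        card {k. k < b ^ m \<and> (\<forall>j<s. real (a j) / real b ^ d j \<le> X k j \<and>
                                       X k j < real (a j + 1) / real b ^ d j)} = b ^ t)"

definition is_digital_seq :: "nat \<Rightarrow> nat \<Rightarrow> nat \<Rightarrow> (nat \<Rightarrow> nat \<Rightarrow> nat \<Rightarrow> nat) \<Rightarrow> bool" where
  "is_digital_seq b t s C \<longleftrightarrow>
     (\<forall>j<s. \<forall>i l. C j i l < b) \<and>
     (\<forall>m'\<ge>t. \<forall>k. is_net b t m' s (\<lambda>i j. seq_coord b C j (k * b ^ m' + i)))"

definition min_quality :: "nat \<Rightarrow> nat \<Rightarrow> nat \<Rightarrow> (nat \<Rightarrow> nat \<Rightarrow> nat \<Rightarrow> nat) \<Rightarrow> nat" where
  "min_quality b m s C = (LEAST t. is_net b t m s (\<lambda>k j. net_coord b m C j k))"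

definition rows_lin_indep :: "nat \<Rightarrow> nat \<Rightarrow> nat \<Rightarrow> (nat \<Rightarrow> nat \<Rightarrow> nat \<Rightarrow> nat) \<Rightarrow> (nat \<Rightarrow> nat) \<Rightarrow> bool" where
  "rows_lin_indep b m s C dd \<longleftrightarrow> (\<forall>j<s. dd j \<le> m) \<and>
     (\<forall>c :: nat \<Rightarrow> nat \<Rightarrow> nat. (\<forall>j<s. \<forall>i<dd j. c j i < b) \<longrightarrow>
        (\<forall>l<m. (\<Sum>j<s. \<Sum>i<dd j. c j i * C j i l) mod b = 0) \<longrightarrow>
        (\<forall>j<s. \<forall>i<dd j. c j i = 0))"

definition lin_indep_param :: "nat \<Rightarrow> nat \<Rightarrow> nat \<Rightarrow> (nat \<Rightarrow> nat \<Rightarrow> nat \<Rightarrow> nat) \<Rightarrow> nat" where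
  "lin_indep_param b m s C =
     (GREATEST d. \<forall>dd :: nat \<Rightarrow> nat. (\<Sum>j<s. dd j) = d \<longrightarrow> rows_lin_indep b m s C dd)"

definition reduced :: "nat \<Rightarrow> (nat \<Rightarrow> nat) \<Rightarrow> (nat \<Rightarrow> nat) \<Rightarrow> (nat \<Rightarrow> nat \<Rightarrow> nat \<Rightarrow> nat)
                        \<Rightarrow> nat \<Rightarrow> nat \<Rightarrow> nat \<Rightarrow> nat" where
  "reduced m wr wc C j i l =
     (if i < m - min m (wr j) \<and> l < m - min m (wc j) then C j i l else 0)"

end

theory Submission
  imports Defs "HOL-Number_Theory.Cong" "HOL-Library.FuncSet"
begin

lemma digit_less: "0 < b \<Longrightarrow> digit b k l < b"
  by (simp add: digit_def)

lemma digit_eq_0_if_less_power: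
  assumes "0 < b" "k < b ^ L" "L \<le> l"
  shows "digit b k l = 0"
proof -
  have "b ^ L \<le> b ^ l" using assms by (simp add: power_increasing)
  then show ?thesis using assms by (simp add: digit_def)
qed

lemma self_less_power: "2 \<le> b \<Longrightarrow> k < b ^ k"
  using less_exp[of k] power_mono[of 2 b k] by linarith

definition from_digits :: "nat \<Rightarrow> nat \<Rightarrow> (nat \<Rightarrow> nat) \<Rightarrow> nat" where
  "from_digits b L e = (\<Sum>l<L. e l * b ^ l)"

lemma from_digits_Suc: "from_digits b (Suc L) e = from_digits b L e + e L * b ^ L"
  by (simp add: from_digits_def)

lemma from_digits_less:
  assumes "2 \<le> b" "\<forall>l<L. e l < b"
  shows "from_digits b L e < b ^ L"
  using assms(2)
proof (induction L)
  case (Suc L)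
  then have "from_digits b L e < b ^ L" and "e L \<le> b - 1" by auto
  then have "from_digits b (Suc L) e < b ^ L + (b - 1) * b ^ L"
    by (simp add: from_digits_Suc add_less_le_mono)
  also have "\<dots> = b ^ Suc L" using assms(1) by (cases b) auto
  finally show ?case .
qed (simp add: from_digits_def)

lemma digit_from_digits:
  assumes b: "2 \<le> b" and e: "\<forall>l<L. e l < b" and l: "l < L"
  shows "digit b (from_digits b L e) l = e l"
  using e l
proof (induction L)
  case (Suc L)
  define x where "x = from_digits b L e"
  have x: "x < b ^ L" unfolding x_def using from_digits_less[OF b] Suc.prems by auto
  have div: "(x + e L * b ^ L) div b ^ i = e L * b ^ (L - i) + x div b ^ i" if "i \<le> L" for i
  proof -
    have "(x + e L * b ^ (L - i) * b ^ i) div b ^ i = e L * b ^ (L - i) + x div b ^ i"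
      using b by simp
    moreover have "e L * b ^ (L - i) * b ^ i = e L * b ^ L"
      using that by (simp add: mult.assoc flip: power_add)
    ultimately show ?thesis by metis
  qed
  show ?case
  proof (cases "l < L")
    case True
    have "b ^ (L - l) = b * b ^ (L - Suc l)"
      using True by (simp add: Suc_diff_Suc flip: power_Suc)
    then have "digit b (x + e L * b ^ L) l = (x div b ^ l + b * (e L * b ^ (L - Suc l))) mod b"
      using True div[of l] by (simp add: digit_def algebra_simps)
    also have "\<dots> = digit b x l" by (simp add: digit_def)
    finally show ?thesis using Suc True by (simp add: from_digits_Suc x_def)
  next
    case False
    then have "l = L" using Suc.prems by simp
    then show ?thesis using div[of L] x Suc.prems by (simp add: digit_def from_digits_Suc x_def)
  qed
qed simp

lemma from_digits_digit_mod: "from_digits b L (digit b k) = k mod b ^ L"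
proof (induction L)
  case (Suc L)
  have "k mod b ^ Suc L = b ^ L * (k div b ^ L mod b) + k mod b ^ L"
    by (metis mod_mult2_eq power_Suc2)
  then show ?case using Suc by (simp add: from_digits_Suc digit_def)
qed (simp add: from_digits_def)

lemma from_digits_digit: "k < b ^ L \<Longrightarrow> from_digits b L (digit b k) = k"
  by (simp add: from_digits_digit_mod)

lemma eq_if_digits_eq:
  assumes "k < b ^ L" "k' < b ^ L" "\<forall>l<L. digit b k l = digit b k' l"
  shows "k = k'"
proof -
  have "from_digits b L (digit b k) = from_digits b L (digit b k')"
    using assms(3) unfolding from_digits_def by simp
  then show ?thesis using assms(1,2) by (simp add: from_digits_digit)
qed

definition lead_value :: "nat \<Rightarrow> nat \<Rightarrow> (nat \<Rightarrow> nat) \<Rightarrow> nat" where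
  "lead_value b d y = (\<Sum>i<d. y i * b ^ (d - 1 - i))"

lemma lead_value_eq_from_digits: "lead_value b d y = from_digits b d (\<lambda>l. y (d - 1 - l))"
proof -
  have "from_digits b d (\<lambda>l. y (d - 1 - l)) = (\<Sum>l<d. (\<lambda>i. y i * b ^ (d - 1 - i)) (d - Suc l))"
    unfolding from_digits_def by (intro sum.cong) (auto simp: Suc_diff_Suc)
  also have "\<dots> = lead_value b d y" unfolding lead_value_def by (rule sum.nat_diff_reindex)
  finally show ?thesis by simp
qed

lemma lead_value_less: "2 \<le> b \<Longrightarrow> \<forall>i<d. y i < b \<Longrightarrow> lead_value b d y < b ^ d"
  unfolding lead_value_eq_from_digits by (rule from_digits_less) auto

lemma digit_lead_value:
  assumes "2 \<le> b" "\<forall>i<d. y i < b" "i < d"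
  shows "digit b (lead_value b d y) (d - 1 - i) = y i"
  unfolding lead_value_eq_from_digits using assms by (subst digit_from_digits) auto

lemma lead_value_digit:
  assumes "a < b ^ d"
  shows "lead_value b d (\<lambda>i. digit b a (d - 1 - i)) = a"
proof -
  have "lead_value b d (\<lambda>i. digit b a (d - 1 - i)) = from_digits b d (digit b a)"
    unfolding lead_value_eq_from_digits from_digits_def by (intro sum.cong) auto
  then show ?thesis using assms by (simp add: from_digits_digit)
qed

lemma lead_value_max_Suc: "1 \<le> b \<Longrightarrow> lead_value b q (\<lambda>_. b - 1) + 1 = b ^ q"
proof -
  assume b: "1 \<le> b"
  have "(b - 1) * (\<Sum>i<q. b ^ i) + 1 = b ^ q"
  proof (induction q)
    case (Suc q)
    have "(b - 1) * (\<Sum>i<Suc q. b ^ i) + 1 = b ^ q + (b - 1) * b ^ q"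
      using Suc by (simp add: algebra_simps)
    also have "\<dots> = b ^ Suc q" using b by (cases b) auto
    finally show ?case .
  qed simp
  moreover have "lead_value b q (\<lambda>_. b - 1) = (b - 1) * (\<Sum>i<q. b ^ i)"
    using sum.nat_diff_reindex[of "\<lambda>i. b ^ i" q] by (simp add: lead_value_def flip: sum_distrib_left)
  ultimately show ?thesis by simp
qed

lemma sum_mult_mod_right: "(\<Sum>l\<in>S. g l * (f l mod b)) mod (b::nat) = (\<Sum>l\<in>S. g l * f l) mod b"
proof -
  have "(\<Sum>l\<in>S. g l * (f l mod b)) mod b = (\<Sum>l\<in>S. (g l * (f l mod b)) mod b) mod b"
    by (simp add: mod_sum_eq)
  also have "\<dots> = (\<Sum>l\<in>S. g l * f l) mod b"
    by (simp add: mod_mult_right_eq mod_sum_eq)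
  finally show ?thesis .
qed

lemma mod_add_left_cancel_less:
  assumes "(x + c) mod b = (y + c) mod (b::nat)" "x < b" "y < b"
  shows "x = y"
  using assms cong_add_rcancel_nat[of x c y b] by (simp add: cong_def)

definition digit_map :: "nat \<Rightarrow> nat \<Rightarrow> ('x \<Rightarrow> nat \<Rightarrow> nat) \<Rightarrow> nat \<Rightarrow> 'x \<Rightarrow> nat" where
  "digit_map b L A k = (\<lambda>x. (\<Sum>l<L. A x l * digit b k l) mod b)"

lemma digit_map_less: "0 < b \<Longrightarrow> digit_map b L A k x < b"
  by (simp add: digit_map_def)

lemma digit_map_from_digits:
  assumes "2 \<le> b" "\<forall>l<L. e l < b"
  shows "digit_map b L A (from_digits b L e) x = (\<Sum>l<L. A x l * e l) mod b"
  unfolding digit_map_def using digit_from_digits[OF assms]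
  by (intro arg_cong[where f="\<lambda>z. z mod b"] sum.cong) auto

text \<open>Digitwise \<open>k + k2 - k1\<close> over \<open>\<bbbF>\<^sub>b\<close>; multiplication by \<open>b - 1\<close> is negation.\<close>
definition digit_translate :: "nat \<Rightarrow> nat \<Rightarrow> nat \<Rightarrow> nat \<Rightarrow> nat \<Rightarrow> nat" where
  "digit_translate b L k1 k2 k =
     from_digits b L (\<lambda>l. (digit b k l + digit b k2 l + (b - 1) * digit b k1 l) mod b)"

lemma digit_translate_less: "2 \<le> b \<Longrightarrow> digit_translate b L k1 k2 k < b ^ L"
  unfolding digit_translate_def by (rule from_digits_less) auto

lemma digit_map_digit_translate:
  assumes "2 \<le> b"
  shows "digit_map b L A (digit_translate b L k1 k2 k) x =
    (digit_map b L A k x + digit_map b L A k2 x + (b - 1) * digit_map b L A k1 x) mod b"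
proof -
  have "digit_map b L A (digit_translate b L k1 k2 k) x =
      (\<Sum>l<L. A x l * ((digit b k l + digit b k2 l + (b - 1) * digit b k1 l) mod b)) mod b"
    unfolding digit_translate_def using assms by (intro digit_map_from_digits) auto
  also have "\<dots> = (\<Sum>l<L. A x l * (digit b k l + digit b k2 l + (b - 1) * digit b k1 l)) mod b"
    by (rule sum_mult_mod_right)
  also have "\<dots> = ((\<Sum>l<L. A x l * digit b k l) + (\<Sum>l<L. A x l * digit b k2 l)
                  + (b - 1) * (\<Sum>l<L. A x l * digit b k1 l)) mod b"
    by (simp add: sum.distrib sum_distrib_left algebra_simps)
  also have "\<dots> = (digit_map b L A k x + digit_map b L A k2 x + (b - 1) * digit_map b L A k1 x) mod b"
    unfolding digit_map_def cong_def[symmetric]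
    by (intro cong_add cong_mult cong_refl) (simp_all add: cong_def)
  finally show ?thesis .
qed

lemma digit_map_digit_translate_fiber:
  assumes "2 \<le> b" "digit_map b L A k = digit_map b L A k1"
  shows "digit_map b L A (digit_translate b L k1 k2 k) = digit_map b L A k2"
proof
  fix x
  let ?v1 = "digit_map b L A k1 x" and ?v2 = "digit_map b L A k2 x"
  have "?v1 + ?v2 + (b - 1) * ?v1 = ?v2 + ?v1 * b"
    using assms(1) by (cases b) (auto simp: algebra_simps)
  moreover have "(?v2 + ?v1 * b) mod b = ?v2"
    using assms(1) digit_map_less[of b L A k2 x] by simp
  ultimately have "(?v1 + ?v2 + (b - 1) * ?v1) mod b = ?v2" by (simp only:)
  then show "digit_map b L A (digit_translate b L k1 k2 k) x = ?v2"
    using assms by (simp add: digit_map_digit_translate)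
qed

lemma inj_on_digit_translate:
  assumes b: "2 \<le> b"
  shows "inj_on (digit_translate b L k1 k2) {..<b ^ L}"
proof (rule inj_onI)
  fix k k' assume k: "k \<in> {..<b ^ L}" and k': "k' \<in> {..<b ^ L}"
    and eq: "digit_translate b L k1 k2 k = digit_translate b L k1 k2 k'"
  have "digit b k l = digit b k' l" if l: "l < L" for l
  proof (rule mod_add_left_cancel_less)
    have "digit b (digit_translate b L k1 k2 k'') l =
        (digit b k'' l + (digit b k2 l + (b - 1) * digit b k1 l)) mod b" for k''
      unfolding digit_translate_def using b l by (subst digit_from_digits) (auto simp: add.assoc)
    then show "(digit b k l + (digit b k2 l + (b - 1) * digit b k1 l)) mod b =
        (digit b k' l + (digit b k2 l + (b - 1) * digit b k1 l)) mod b"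
      using eq by metis
  qed (use b in \<open>simp_all add: digit_less\<close>)
  then show "k = k'" using k k' eq_if_digits_eq[of k b L k'] by simp
qed

lemma card_fiber_le:
  assumes "2 \<le> b" "k2 < b ^ L"
  shows "card {k. k < b ^ L \<and> digit_map b L A k = digit_map b L A k1}
       \<le> card {k. k < b ^ L \<and> digit_map b L A k = digit_map b L A k2}"
proof (rule card_inj_on_le)
  show "inj_on (digit_translate b L k1 k2) {k. k < b ^ L \<and> digit_map b L A k = digit_map b L A k1}"
    by (rule inj_on_subset[OF inj_on_digit_translate[OF assms(1)]]) auto
  show "digit_translate b L k1 k2 ` {k. k < b ^ L \<and> digit_map b L A k = digit_map b L A k1}
      \<subseteq> {k. k < b ^ L \<and> digit_map b L A k = digit_map b L A k2}"
    using digit_translate_less[OF assms(1)] digit_map_digit_translate_fiber[OF assms(1)] by blast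
qed simp

lemma card_fiber_eq:
  assumes "2 \<le> b" "k1 < b ^ L" "k2 < b ^ L"
  shows "card {k. k < b ^ L \<and> digit_map b L A k = digit_map b L A k1}
       = card {k. k < b ^ L \<and> digit_map b L A k = digit_map b L A k2}"
  using card_fiber_le[OF assms(1,3)] card_fiber_le[OF assms(1,2)] by (rule antisym)

lemma card_image_mult_card_fiber:
  assumes b: "2 \<le> b" and k1: "k1 < b ^ L"
  shows "card (digit_map b L A ` {..<b ^ L}) *
           card {k. k < b ^ L \<and> digit_map b L A k = digit_map b L A k1} = b ^ L"
proof -
  define Z where "Z = digit_map b L A ` {..<b ^ L}"
  let ?F = "\<lambda>z. {k. k < b ^ L \<and> digit_map b L A k = z}"
  have "{..<b ^ L} = (\<Union>z\<in>Z. ?F z)" unfolding Z_def by blast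
  moreover have "card (\<Union>z\<in>Z. ?F z) = (\<Sum>z\<in>Z. card (?F z))"
    by (rule card_UN_disjoint) (auto simp: Z_def)
  moreover have "\<dots> = (\<Sum>z\<in>Z. card (?F (digit_map b L A k1)))"
    using card_fiber_eq[OF b _ k1] by (intro sum.cong) (auto simp: Z_def)
  ultimately show ?thesis unfolding Z_def by simp
qed

lemma double_sum_lessThan: "2 * (\<Sum>i<n. i) = n * (n - 1::nat)"
  by (induction n) (auto simp: algebra_simps)

lemma exists_inverse_mod_prime:
  assumes "prime (b::nat)" "0 < c" "c < b"
  shows "\<exists>x. (c * x) mod b = 1"
proof -
  have "coprime c b"
    using assms by (metis coprime_commute prime_imp_coprime nat_dvd_not_less)
  then obtain x where "[c * x = Suc 0] (mod b)" using cong_solve_coprime_nat by blast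
  then show ?thesis using prime_gt_1_nat[OF assms(1)] by (auto simp: cong_def)
qed

text \<open>A nonzero linear functional on \<open>\<bbbF>\<^sub>b\<^sup>L\<close> takes every value equally often.\<close>
lemma double_sum_digit_functional:
  assumes p: "prime b" and k0: "k0 < b ^ L" and nz: "(\<Sum>l<L. a l * digit b k0 l) mod b \<noteq> 0"
  shows "2 * (\<Sum>k<b ^ L. (\<Sum>l<L. a l * digit b k l) mod b) = b ^ L * (b - 1)"
proof -
  have b: "2 \<le> b" using p prime_ge_2_nat by blast
  let ?A = "\<lambda>_::unit. a"
  define g where "g k = digit_map b L ?A k ()" for k
  define F where "F = card {k. k < b ^ L \<and> digit_map b L ?A k = digit_map b L ?A k0}"
  have surj: "\<exists>k<b ^ L. g k = v" if v: "v < b" for v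
  proof -
    have c: "0 < g k0" "g k0 < b" using nz b by (auto simp: g_def digit_map_def)
    obtain x where x: "(g k0 * x) mod b = 1" using exists_inverse_mod_prime[OF p c] by blast
    define kv where "kv = from_digits b L (\<lambda>l. (x * v * digit b k0 l) mod b)"
    have "kv < b ^ L" unfolding kv_def using b by (intro from_digits_less) auto
    moreover have "g kv = (\<Sum>l<L. a l * (x * v * digit b k0 l)) mod b"
      unfolding g_def kv_def using b by (simp add: digit_map_from_digits sum_mult_mod_right)
    moreover have "\<dots> = (v * ((g k0 * x) mod b)) mod b"
      by (simp add: g_def digit_map_def sum_distrib_left mod_mult_right_eq algebra_simps)
    ultimately show ?thesis using x v by auto
  qed
  have image: "g ` {..<b ^ L} = {..<b}"
  proof
    show "g ` {..<b ^ L} \<subseteq> {..<b}" using b by (auto simp: g_def digit_map_less)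
    show "{..<b} \<subseteq> g ` {..<b ^ L}" using surj by (auto simp: image_iff)
  qed
  have "card (digit_map b L ?A ` {..<b ^ L}) = card (g ` {..<b ^ L})"
    by (rule bij_betw_same_card[where f="\<lambda>f. f ()"])
       (auto simp: bij_betw_def inj_on_def g_def fun_eq_iff)
  then have bF: "b * F = b ^ L" using card_image_mult_card_fiber[OF b k0, of ?A] image by (simp add: F_def)
  have fiber: "card {k \<in> {..<b ^ L}. g k = v} = F" if "v < b" for v
  proof -
    obtain kv where kv: "kv < b ^ L" "g kv = v" using surj \<open>v < b\<close> by blast
    have "{k \<in> {..<b ^ L}. g k = v} = {k. k < b ^ L \<and> digit_map b L ?A k = digit_map b L ?A kv}"
      using kv(2) by (auto simp: g_def fun_eq_iff)
    then show ?thesis unfolding F_def using card_fiber_eq[OF b kv(1) k0] by simp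
  qed
  have "(\<Sum>k<b ^ L. g k) = (\<Sum>v<b. \<Sum>k\<in>{k \<in> {..<b ^ L}. g k = v}. g k)"
    using image by (intro sum.group[symmetric]) auto
  also have "\<dots> = (\<Sum>v<b. v * F)"
  proof (rule sum.cong[OF refl])
    fix v assume "v \<in> {..<b}"
    then show "(\<Sum>k\<in>{k \<in> {..<b ^ L}. g k = v}. g k) = v * F"
      using fiber[of v] by simp
  qed
  also have "\<dots> = (\<Sum>v<b. v) * F" by (simp add: sum_distrib_right)
  finally have "2 * (\<Sum>k<b ^ L. g k) = (2 * (\<Sum>v<b. v)) * F" by simp
  also have "\<dots> = b * F * (b - 1)" by (simp add: double_sum_lessThan ac_simps)
  finally show ?thesis using bF by (simp add: g_def digit_map_def)
qed

definition radix_value :: "nat \<Rightarrow> (nat \<Rightarrow> nat) \<Rightarrow> real" where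
  "radix_value b y = (\<Sum>i. real (y i) / real b ^ (i + 1))"

lemma sums_max_digits:
  assumes "2 \<le> b"
  shows "(\<lambda>i. real (b - 1) / real b ^ (i + 1)) sums 1"
proof -
  have c: "norm (1 / real b) < 1" using assms by simp
  have "(\<lambda>i. (real (b - 1) / real b) * (1 / real b) ^ i) sums
          ((real (b - 1) / real b) * (1 / (1 - 1 / real b)))"
    by (rule sums_mult[OF geometric_sums[OF c]])
  moreover have "(real (b - 1) / real b) * (1 / (1 - 1 / real b)) = 1"
    using assms by (simp add: field_simps of_nat_diff)
  moreover have "(\<lambda>i. (real (b - 1) / real b) * (1 / real b) ^ i) = (\<lambda>i. real (b - 1) / real b ^ (i + 1))"
    by (simp add: power_divide)
  ultimately show ?thesis by metis
qed

lemma summable_radix_value: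
  assumes "2 \<le> b" "\<forall>i. y i < b"
  shows "summable (\<lambda>i. real (y i) / real b ^ (i + 1))"
proof (rule summable_comparison_test'[OF sums_summable[OF sums_max_digits[OF assms(1)]]])
  fix i
  have "y i \<le> b - 1" using spec[OF assms(2), of i] by linarith
  then show "norm (real (y i) / real b ^ (i + 1)) \<le> real (b - 1) / real b ^ (i + 1)"
    by (simp add: divide_right_mono)
qed

lemma radix_value_nonneg: "2 \<le> b \<Longrightarrow> \<forall>i. y i < b \<Longrightarrow> 0 \<le> radix_value b y"
  unfolding radix_value_def by (intro suminf_nonneg summable_radix_value) auto

lemma radix_value_less_1:
  assumes b: "2 \<le> b" and y: "\<forall>i. y i < b" and i0: "y i0 \<noteq> b - 1"
  shows "radix_value b y < 1"
proof -
  let ?g = "\<lambda>i. real (b - 1) / real b ^ (i + 1)"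
  let ?f = "\<lambda>i. real (y i) / real b ^ (i + 1)"
  have sg: "summable ?g" by (rule sums_summable[OF sums_max_digits[OF b]])
  have sf: "summable ?f" by (rule summable_radix_value[OF b y])
  have le: "y i \<le> b - 1" for i using spec[OF y, of i] by linarith
  have "0 < (\<Sum>i. ?g i - ?f i)"
  proof (subst suminf_pos_iff)
    show "summable (\<lambda>i. ?g i - ?f i)" using sg sf by (rule summable_diff)
    show "0 \<le> ?g i - ?f i" for i using le[of i] by (simp add: divide_right_mono)
    have "real (y i0) < real (b - 1)" using le[of i0] i0 by simp
    then have "?f i0 < ?g i0" using b by (simp add: divide_strict_right_mono)
    then show "\<exists>i. 0 < ?g i - ?f i" by auto
  qed
  also have "\<dots> = 1 - radix_value b y"
    using suminf_diff[OF sg sf] sums_unique[OF sums_max_digits[OF b]] by (simp add: radix_value_def)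
  finally show ?thesis by simp
qed

lemma radix_value_max_digits:
  assumes "2 \<le> b" "\<forall>i. y i = b - 1"
  shows "radix_value b y = 1"
  using sums_unique[OF sums_max_digits[OF assms(1)]] assms(2) by (simp add: radix_value_def)

lemma power_mult_radix_value:
  assumes b: "2 \<le> b" and y: "\<forall>i. y i < b"
  shows "real b ^ d * radix_value b y = real (lead_value b d y) + radix_value b (\<lambda>i. y (i + d))"
proof -
  let ?f = "\<lambda>i. real (y i) / real b ^ (i + 1)"
  have sf: "summable ?f" by (rule summable_radix_value[OF b y])
  have "radix_value b y = (\<Sum>i. ?f (i + d)) + (\<Sum>i<d. ?f i)"
    unfolding radix_value_def by (rule suminf_split_initial_segment[OF sf])
  then have "real b ^ d * radix_value b y = real b ^ d * (\<Sum>i. ?f (i + d)) + (\<Sum>i<d. real b ^ d * ?f i)"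
    by (simp add: distrib_left sum_distrib_left)
  also have "real b ^ d * (\<Sum>i. ?f (i + d)) = (\<Sum>i. real b ^ d * ?f (i + d))"
    by (rule suminf_mult[symmetric]) (rule summable_ignore_initial_segment[OF sf])
  also have "(\<Sum>i. real b ^ d * ?f (i + d)) = radix_value b (\<lambda>i. y (i + d))"
    unfolding radix_value_def using b by (intro suminf_cong) (simp add: power_add)
  also have "(\<Sum>i<d. real b ^ d * ?f i) = real (lead_value b d y)"
    unfolding lead_value_def of_nat_sum
  proof (rule sum.cong[OF refl])
    fix i assume "i \<in> {..<d}"
    then have "d = (d - 1 - i) + (i + 1)" by simp
    then have "real b ^ d = real b ^ (d - 1 - i) * real b ^ (i + 1)"
      by (metis power_add)
    then show "real b ^ d * ?f i = real (y i * b ^ (d - 1 - i))" using b by simp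
  qed
  finally show ?thesis by simp
qed

text \<open>The point with digits \<open>y\<close> lies in the closure of the elementary interval with
  leading digits \<open>y 0, \<dots>, y (d - 1)\<close>, and in the interval itself unless its digits
  are eventually \<open>b - 1\<close>.\<close>
lemma floor_power_mult_radix_value:
  assumes b: "2 \<le> b" and y: "\<forall>i. y i < b"
  shows "\<lfloor>real b ^ d * radix_value b y\<rfloor> =
           int (lead_value b d y) + (if \<forall>i\<ge>d. y i = b - 1 then 1 else 0)"
proof -
  let ?z = "\<lambda>i. y (i + d)"
  have z: "\<forall>i. ?z i < b" using y by simp
  show ?thesis
  proof (cases "\<forall>i\<ge>d. y i = b - 1")
    case True
    then have "radix_value b ?z = 1" using b by (intro radix_value_max_digits) auto
    then have "real b ^ d * radix_value b y = real (lead_value b d y + 1)"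
      using power_mult_radix_value[OF b y] by simp
    then show ?thesis using True by (simp only: floor_of_nat) simp
  next
    case False
    then obtain i where "i \<ge> d" "y i \<noteq> b - 1" by auto
    then have "radix_value b ?z < 1" using radix_value_less_1[OF b z, of "i - d"] by simp
    moreover have "0 \<le> radix_value b ?z" by (rule radix_value_nonneg[OF b z])
    ultimately have "\<lfloor>real b ^ d * radix_value b y\<rfloor> = int (lead_value b d y)"
      using power_mult_radix_value[OF b y, of d] by (simp add: floor_eq_iff)
    then show ?thesis using False by simp
  qed
qed

lemma in_interval_iff_floor:
  assumes "2 \<le> b"
  shows "(real a / real b ^ d \<le> x \<and> x < real (a + 1) / real b ^ d) \<longleftrightarrow> \<lfloor>real b ^ d * x\<rfloor> = int a"
proof -
  have "0 < real b ^ d" using assms by simp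
  then have "(real a / real b ^ d \<le> x \<and> x < real (a + 1) / real b ^ d) \<longleftrightarrow>
        (real a \<le> real b ^ d * x \<and> real b ^ d * x < real a + 1)"
    by (simp add: divide_le_eq less_divide_eq ac_simps)
  then show ?thesis by (simp add: floor_eq_iff)
qed

lemma radix_value_in_interval_iff:
  assumes b: "2 \<le> b" and y: "\<forall>i. y i < b" and i0: "d \<le> i0" "y i0 \<noteq> b - 1" and a: "a < b ^ d"
  shows "(real a / real b ^ d \<le> radix_value b y \<and> radix_value b y < real (a + 1) / real b ^ d)
           \<longleftrightarrow> (\<forall>i<d. y i = digit b a (d - 1 - i))"
proof -
  have "\<not> (\<forall>i\<ge>d. y i = b - 1)" using i0 by auto
  then have "\<lfloor>real b ^ d * radix_value b y\<rfloor> = int (lead_value b d y)"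
    using floor_power_mult_radix_value[OF b y, of d] by simp
  then have "(real a / real b ^ d \<le> radix_value b y \<and> radix_value b y < real (a + 1) / real b ^ d)
          \<longleftrightarrow> lead_value b d y = a"
    using in_interval_iff_floor[OF b] by auto
  also have "\<dots> \<longleftrightarrow> (\<forall>i<d. y i = digit b a (d - 1 - i))"
  proof
    assume "lead_value b d y = a"
    then show "\<forall>i<d. y i = digit b a (d - 1 - i)" using digit_lead_value[OF b] y by metis
  next
    assume "\<forall>i<d. y i = digit b a (d - 1 - i)"
    then show "lead_value b d y = a"
      using lead_value_digit[OF a] unfolding lead_value_def by simp
  qed
  finally show ?thesis .
qed

lemma net_coordinate_floor:
  assumes b: "2 \<le> b" and net: "is_net b t (q + t) s X" and j: "j < s"
    and nonneg: "\<And>k. 0 \<le> X k j"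
  shows net_coordinate_floor_less: "k < b ^ (q + t) \<Longrightarrow> nat \<lfloor>real b ^ q * X k j\<rfloor> < b ^ q"
    and card_net_coordinate_floor: "a < b ^ q \<Longrightarrow>
      card {k. k < b ^ (q + t) \<and> nat \<lfloor>real b ^ q * X k j\<rfloor> = a} = b ^ t"
proof -
  define idx where "idx k = nat \<lfloor>real b ^ q * X k j\<rfloor>" for k
  define d :: "nat \<Rightarrow> nat" where "d j' = (if j' = j then q else 0)" for j'
  define e :: "nat \<Rightarrow> nat \<Rightarrow> nat" where "e a j' = (if j' = j then a else 0)" for a j'
  define G where "G a = {k. k < b ^ (q + t) \<and> (\<forall>j'<s.
    real (e a j') / real b ^ d j' \<le> X k j' \<and> X k j' < real (e a j' + 1) / real b ^ d j')}" for a
  have card_G: "card (G a) = b ^ t" if "a < b ^ q" for a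
  proof -
    have "(\<Sum>j'<s. d j') = q + t - t" using j by (simp add: d_def)
    moreover have "\<forall>j'<s. e a j' < b ^ d j'" using that b by (simp add: d_def e_def)
    ultimately show ?thesis
      using net[unfolded is_net_def, THEN conjunct2, rule_format, of d "e a"] by (simp add: G_def)
  qed
  have idx_G: "idx k = a" if "k \<in> G a" for k a
  proof -
    have "real (e a j) / real b ^ d j \<le> X k j \<and> X k j < real (e a j + 1) / real b ^ d j"
      using that j by (simp add: G_def)
    then have "real a / real b ^ q \<le> X k j \<and> X k j < real (a + 1) / real b ^ q"
      by (simp add: d_def e_def)
    then show ?thesis using in_interval_iff_floor[OF b] by (simp add: idx_def)
  qed
  have "card (\<Union>a<b ^ q. G a) = (\<Sum>a<b ^ q. card (G a))"
  proof (rule card_UN_disjoint)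
    show "\<forall>a\<in>{..<b ^ q}. finite (G a)" by (simp add: G_def)
    show "\<forall>a\<in>{..<b ^ q}. \<forall>a'\<in>{..<b ^ q}. a \<noteq> a' \<longrightarrow> G a \<inter> G a' = {}"
      using idx_G by blast
  qed simp
  also have "\<dots> = b ^ (q + t)" by (simp add: card_G power_add)
  finally have cover: "(\<Union>a<b ^ q. G a) = {..<b ^ (q + t)}"
    by (intro card_subset_eq) (auto simp: G_def)
  have in_G: "\<exists>a<b ^ q. k \<in> G a" if "k < b ^ (q + t)" for k
  proof -
    have "k \<in> (\<Union>a<b ^ q. G a)" using that cover by simp
    then show ?thesis by blast
  qed
  show "idx k < b ^ q" if "k < b ^ (q + t)" for k
    using in_G[OF that] idx_G by blast
  show "card {k. k < b ^ (q + t) \<and> idx k = a} = b ^ t" if "a < b ^ q" for a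
  proof -
    have "{k. k < b ^ (q + t) \<and> idx k = a} \<subseteq> G a"
      using in_G idx_G by blast
    moreover have "G a \<subseteq> {k. k < b ^ (q + t) \<and> idx k = a}" using idx_G by (auto simp: G_def)
    ultimately show ?thesis using card_G[OF that] by (metis subset_antisym)
  qed
qed

lemma double_sum_floor_net_coordinate:
  assumes b: "2 \<le> b" and net: "is_net b t (q + t) s X" and j: "j < s"
    and nonneg: "\<And>k. 0 \<le> X k j"
  shows "2 * (\<Sum>k<b ^ (q + t). nat \<lfloor>real b ^ q * X k j\<rfloor>) = b ^ (q + t) * (b ^ q - 1)"
proof -
  let ?idx = "\<lambda>k. nat \<lfloor>real b ^ q * X k j\<rfloor>"
  have "(\<Sum>k<b ^ (q + t). ?idx k) = (\<Sum>a<b ^ q. \<Sum>k\<in>{k \<in> {..<b ^ (q + t)}. ?idx k = a}. ?idx k)"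
    using net_coordinate_floor_less[OF assms] by (intro sum.group[symmetric]) auto
  also have "\<dots> = (\<Sum>a<b ^ q. a * b ^ t)"
  proof (rule sum.cong[OF refl])
    fix a assume "a \<in> {..<b ^ q}"
    then show "(\<Sum>k\<in>{k \<in> {..<b ^ (q + t)}. ?idx k = a}. ?idx k) = a * b ^ t"
      using card_net_coordinate_floor[OF assms, of a] by simp
  qed
  also have "\<dots> = (\<Sum>a<b ^ q. a) * b ^ t" by (simp add: sum_distrib_right)
  finally show ?thesis by (simp add: double_sum_lessThan power_add ac_simps)
qed

definition seq_digits :: "nat \<Rightarrow> (nat \<Rightarrow> nat \<Rightarrow> nat \<Rightarrow> nat) \<Rightarrow> nat \<Rightarrow> nat \<Rightarrow> nat \<Rightarrow> nat" where
  "seq_digits b C j k i = (\<Sum>l<k. C j i l * digit b k l) mod b"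

lemma seq_coord_eq_radix_value: "seq_coord b C j k = radix_value b (seq_digits b C j k)"
  by (simp add: seq_coord_def radix_value_def seq_digits_def)

lemma seq_digits_less: "0 < b \<Longrightarrow> seq_digits b C j k i < b"
  by (simp add: seq_digits_def)

lemma seq_digits_eq_digit_map:
  assumes b: "2 \<le> b" and k: "k < b ^ L"
  shows "seq_digits b C j k = digit_map b L (C j) k"
proof
  fix i
  have "(\<Sum>l<k. C j i l * digit b k l) = (\<Sum>l<k + L. C j i l * digit b k l)"
    using digit_eq_0_if_less_power[of b k k] b self_less_power[OF b, of k]
    by (intro sum.mono_neutral_left) auto
  also have "\<dots> = (\<Sum>l<L. C j i l * digit b k l)"
    using digit_eq_0_if_less_power[of b k L] b k by (intro sum.mono_neutral_right) auto
  finally show "seq_digits b C j k i = digit_map b L (C j) k i"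
    by (simp add: seq_digits_def digit_map_def)
qed

lemma is_net_digital_seq_initial:
  assumes "is_digital_seq b t s C" "t \<le> L"
  shows "is_net b t L s (\<lambda>k j. seq_coord b C j k)"
proof -
  have "is_net b t L s (\<lambda>k j. seq_coord b C j (0 * b ^ L + k))"
    using assms unfolding is_digital_seq_def by blast
  then show ?thesis by simp
qed

lemma double_sum_lead_value_digit_map:
  assumes p: "prime b"
  shows "2 * (\<Sum>k<b ^ L. lead_value b q (digit_map b L A k)) =
    b ^ L * (b - 1) * (\<Sum>i<q. if \<forall>k<b ^ L. digit_map b L A k i = 0 then 0 else b ^ (q - 1 - i))"
proof -
  have row: "2 * (\<Sum>k<b ^ L. digit_map b L A k i) =
      (if \<forall>k<b ^ L. digit_map b L A k i = 0 then 0 else b ^ L * (b - 1))" for i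
  proof (cases "\<forall>k<b ^ L. digit_map b L A k i = 0")
    case False
    then obtain k0 where "k0 < b ^ L" "digit_map b L A k0 i \<noteq> 0" by blast
    then have "2 * (\<Sum>k<b ^ L. digit_map b L A k i) = b ^ L * (b - 1)"
      using double_sum_digit_functional[OF p, of k0 L "A i"] by (simp add: digit_map_def)
    then show ?thesis by (simp only: if_not_P[OF False] if_False)
  qed simp
  have "2 * (\<Sum>k<b ^ L. lead_value b q (digit_map b L A k)) =
      (\<Sum>i<q. b ^ (q - 1 - i) * (2 * (\<Sum>k<b ^ L. digit_map b L A k i)))"
    unfolding lead_value_def
    by (simp add: sum_distrib_left sum_distrib_right sum.swap[of _ "{..<q}"] algebra_simps)
  also have "\<dots> = (\<Sum>i<q. b ^ L * (b - 1) *
      (if \<forall>k<b ^ L. digit_map b L A k i = 0 then 0 else b ^ (q - 1 - i)))"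
  proof (rule sum.cong[OF refl])
    fix i
    show "b ^ (q - 1 - i) * (2 * (\<Sum>k<b ^ L. digit_map b L A k i)) = b ^ L * (b - 1) *
      (if \<forall>k<b ^ L. digit_map b L A k i = 0 then 0 else b ^ (q - 1 - i))"
    proof (cases "\<forall>k<b ^ L. digit_map b L A k i = 0")
      case False
      then have "2 * (\<Sum>k<b ^ L. digit_map b L A k i) = b ^ L * (b - 1)"
        using row[of i] by (simp only: if_not_P[OF False] if_False)
      then show ?thesis by (simp only: if_not_P[OF False] if_False mult.commute)
    qed (simp add: row)
  qed
  also have "\<dots> = b ^ L * (b - 1) *
      (\<Sum>i<q. if \<forall>k<b ^ L. digit_map b L A k i = 0 then 0 else b ^ (q - 1 - i))"
    by (simp only: sum_distrib_left)
  finally show ?thesis .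
qed

text \<open>Averaging the floor of \<open>b\<^sup>q x\<close> over the first \<open>b\<^sup>q\<^sup>+\<^sup>t\<close> points in two ways: the net
  property gives its exact mean, the linearity of the leading digits gives the mean of
  their value, and the difference counts the points whose digits end in \<open>b - 1\<close>.\<close>
lemma double_card_eventually_max_digits:
  assumes p: "prime b" and ds: "is_digital_seq b t s C" and j: "j < s"
  shows "2 * card {k. k < b ^ (q + t) \<and> (\<forall>i\<ge>q. seq_digits b C j k i = b - 1)} =
    b ^ (q + t) * (b - 1) *
      (\<Sum>i<q. if \<forall>k<b ^ (q + t). seq_digits b C j k i = 0 then b ^ (q - 1 - i) else 0)"
proof -
  have b: "2 \<le> b" using p prime_ge_2_nat by blast
  define L where "L = q + t"
  define T where "T = {k. k < b ^ L \<and> (\<forall>i\<ge>q. seq_digits b C j k i = b - 1)}"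
  define zero where "zero i \<longleftrightarrow> (\<forall>k<b ^ L. seq_digits b C j k i = 0)" for i
  define S where "S = (\<Sum>i<q. if zero i then b ^ (q - 1 - i) else 0)"
  define S' where "S' = (\<Sum>i<q. if zero i then 0 else b ^ (q - 1 - i))"
  have y: "\<forall>i. seq_digits b C j k i < b" for k using b by (simp add: seq_digits_less)
  have floor: "nat \<lfloor>real b ^ q * seq_coord b C j k\<rfloor> =
      lead_value b q (digit_map b L (C j) k) + of_bool (k \<in> T)" if "k < b ^ L" for k
  proof -
    have "\<lfloor>real b ^ q * seq_coord b C j k\<rfloor> =
        int (lead_value b q (digit_map b L (C j) k)) + (if k \<in> T then 1 else 0)"
      using floor_power_mult_radix_value[OF b y, of q k] that
      by (simp add: seq_coord_eq_radix_value T_def seq_digits_eq_digit_map[OF b])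
    then show ?thesis by (cases "k \<in> T") (simp_all add: nat_add_distrib)
  qed
  have "b ^ L * (b ^ q - 1) = 2 * (\<Sum>k<b ^ L. nat \<lfloor>real b ^ q * seq_coord b C j k\<rfloor>)"
    using double_sum_floor_net_coordinate[OF b is_net_digital_seq_initial[OF ds] j] b
    by (simp add: L_def seq_coord_eq_radix_value radix_value_nonneg y)
  also have "(\<Sum>k<b ^ L. nat \<lfloor>real b ^ q * seq_coord b C j k\<rfloor>) =
      (\<Sum>k<b ^ L. lead_value b q (digit_map b L (C j) k)) + (\<Sum>k<b ^ L. of_bool (k \<in> T))"
    using floor by (simp add: sum.distrib)
  also have "(\<Sum>k<b ^ L. of_bool (k \<in> T)) = card T"
  proof -
    have "{..<b ^ L} \<inter> {k. k \<in> T} = T" by (auto simp: T_def)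
    then show ?thesis by simp
  qed
  finally have "b ^ L * (b ^ q - 1) = 2 * (\<Sum>k<b ^ L. lead_value b q (digit_map b L (C j) k)) + 2 * card T"
    by simp
  moreover have "2 * (\<Sum>k<b ^ L. lead_value b q (digit_map b L (C j) k)) = b ^ L * (b - 1) * S'"
  proof -
    have "(\<forall>k<b ^ L. digit_map b L (C j) k i = 0) \<longleftrightarrow> zero i" for i
      using seq_digits_eq_digit_map[OF b] by (auto simp: zero_def)
    then show ?thesis by (simp add: double_sum_lead_value_digit_map[OF p] S'_def)
  qed
  moreover have "b ^ q - 1 = (b - 1) * (S + S')"
  proof -
    have "S + S' = (\<Sum>i<q. b ^ (q - 1 - i))"
      unfolding S_def S'_def by (subst sum.distrib[symmetric]) (rule sum.cong, auto)
    then have "lead_value b q (\<lambda>_. b - 1) = (b - 1) * (S + S')"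
      by (simp add: lead_value_def sum_distrib_left)
    then show ?thesis using lead_value_max_Suc[of b q] b by simp
  qed
  ultimately have "b ^ L * (b - 1) * S + b ^ L * (b - 1) * S' = b ^ L * (b - 1) * S' + 2 * card T"
    by (simp only: distrib_left mult.assoc)
  then have "2 * card T = b ^ L * (b - 1) * S" by linarith
  then show ?thesis by (simp add: T_def L_def S_def zero_def)
qed

lemma seq_digits_not_eventually_max:
  assumes p: "prime b" and ds: "is_digital_seq b t s C" and j: "j < s"
  shows "\<exists>i\<ge>p. seq_digits b C j n i \<noteq> b - 1"
proof (rule ccontr)
  assume "\<not> ?thesis"
  then have tail: "\<forall>i\<ge>p. seq_digits b C j n i = b - 1" by auto
  have b: "2 \<le> b" using p prime_ge_2_nat by blast
  define q where "q = n + p + 1"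
  define L where "L = q + t"
  define T where "T = {k. k < b ^ L \<and> (\<forall>i\<ge>q. seq_digits b C j k i = b - 1)}"
  define zero where "zero i \<longleftrightarrow> (\<forall>k<b ^ L. seq_digits b C j k i = 0)" for i
  define S where "S = (\<Sum>i<q. if zero i then b ^ (q - 1 - i) else 0)"
  have card_T: "2 * card T = b ^ L * (b - 1) * S"
    using double_card_eventually_max_digits[OF p ds j, of q] by (simp add: T_def S_def zero_def L_def)
  have n: "n < b ^ L"
    using self_less_power[OF b, of n] power_increasing[of n L b] b by (simp add: L_def q_def)
  have "n \<in> T" using n tail by (simp add: T_def q_def)
  then have "0 < card T" by (auto simp: T_def card_gt_0_iff)
  then have "S \<noteq> 0" using card_T by (cases "S = 0") auto
  have "\<exists>i<q. zero i"
  proof (rule ccontr)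
    assume "\<not> (\<exists>i<q. zero i)"
    then have "S = 0" unfolding S_def by (intro sum.neutral) auto
    with \<open>S \<noteq> 0\<close> show False by simp
  qed
  then obtain i where i: "i < q" "zero i" by blast
  have "i \<noteq> q - 1"
  proof
    assume "i = q - 1"
    then have "seq_digits b C j n i = b - 1" using tail by (simp add: q_def)
    then show False using i(2) n b by (auto simp: zero_def)
  qed
  then have "b ^ 1 \<le> b ^ (q - 1 - i)" using i(1) b by (intro power_increasing) auto
  also have "\<dots> \<le> S"
  proof -
    have "(if zero i then b ^ (q - 1 - i) else 0) \<le> S" unfolding S_def using i by (intro member_le_sum) auto
    then show ?thesis using i by simp
  qed
  finally have "1 * b \<le> (b - 1) * S" using b by (intro mult_le_mono) auto
  then have "b ^ L * 2 \<le> b ^ L * ((b - 1) * S)" using b by (intro mult_le_mono2) simp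
  then have "b ^ L * 2 \<le> 2 * card T" using card_T by (simp only: mult.assoc)
  then have "b ^ L \<le> card T" by linarith
  moreover have "seq_digits b C j 0 q \<noteq> b - 1" using b by (simp add: seq_digits_def)
  then have "T \<subseteq> {..<b ^ L} - {0}" by (auto simp: T_def)
  then have "card T \<le> b ^ L - 1" using card_mono[of "{..<b ^ L} - {0}" T] b by simp
  moreover have "0 < b ^ L" using b by simp
  ultimately show False by linarith
qed

lemma digital_seq_prescribed_digits:
  assumes p: "prime b" and ds: "is_digital_seq b t s C" and tM: "t \<le> M"
    and sum_dd: "(\<Sum>j<s. dd j) \<le> M - t" and z: "\<forall>j<s. \<forall>i<dd j. z j i < b"
  shows "\<exists>k<b ^ M. \<forall>j<s. \<forall>i<dd j. digit_map b M (C j) k i = z j i"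
proof (cases "s = 0")
  case True
  have "0 < b ^ M" using prime_gt_0_nat[OF p] by simp
  then show ?thesis using True by blast
next
  case False
  have b: "2 \<le> b" using p prime_ge_2_nat by blast
  define dd' where "dd' j = dd j + (if j = 0 then M - t - (\<Sum>j<s. dd j) else 0)" for j
  define z' where "z' j i = (if i < dd j then z j i else 0)" for j i
  define a where "a j = lead_value b (dd' j) (z' j)" for j
  have "(\<Sum>j<s. dd' j) = M - t" using False sum_dd by (simp add: dd'_def sum.distrib)
  moreover have a_less: "\<forall>j<s. a j < b ^ dd' j"
    using z b by (auto simp: a_def z'_def intro!: lead_value_less)
  ultimately have card: "card {k. k < b ^ M \<and> (\<forall>j<s. real (a j) / real b ^ dd' j \<le> seq_coord b C j k
      \<and> seq_coord b C j k < real (a j + 1) / real b ^ dd' j)} = b ^ t"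
    using is_net_digital_seq_initial[OF ds tM] unfolding is_net_def by blast
  obtain k where k: "k < b ^ M" and interval: "\<forall>j<s. real (a j) / real b ^ dd' j \<le> seq_coord b C j k
      \<and> seq_coord b C j k < real (a j + 1) / real b ^ dd' j"
  proof (rule ccontr)
    assume "\<not> thesis"
    with that have "{k. k < b ^ M \<and> (\<forall>j<s. real (a j) / real b ^ dd' j \<le> seq_coord b C j k
      \<and> seq_coord b C j k < real (a j + 1) / real b ^ dd' j)} = {}" by blast
    with card b show False by (metis card.empty power_not_zero not_numeral_le_zero)
  qed
  have "digit_map b M (C j) k i = z j i" if j: "j < s" and i: "i < dd j" for j i
  proof -
    obtain i0 where i0: "dd' j \<le> i0" "seq_digits b C j k i0 \<noteq> b - 1"
      using seq_digits_not_eventually_max[OF p ds j] by blast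
    have y: "\<forall>i. seq_digits b C j k i < b" using b by (simp add: seq_digits_less)
    have "\<forall>i<dd' j. seq_digits b C j k i = digit b (a j) (dd' j - 1 - i)"
      using radix_value_in_interval_iff[OF b y i0 a_less[rule_format, OF j]] interval j
      by (simp add: seq_coord_eq_radix_value)
    moreover have "i < dd' j" using i by (simp add: dd'_def)
    moreover have "\<forall>i<dd' j. z' j i < b" using z j b by (simp add: z'_def)
    then have "digit b (a j) (dd' j - 1 - i) = z j i"
      using digit_lead_value[OF b _ \<open>i < dd' j\<close>] i by (simp add: a_def z'_def)
    ultimately show ?thesis using seq_digits_eq_digit_map[OF b k] by simp
  qed
  then show ?thesis using k by blast
qed

lemma rows_lin_indep_if_onto:
  assumes b: "2 \<le> b" and dd: "\<forall>j<s. dd j \<le> m"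
    and onto: "\<And>z. \<forall>j<s. \<forall>i<dd j. z j i < b \<Longrightarrow>
      \<exists>k. \<forall>j<s. \<forall>i<dd j. digit_map b m (R j) k i = z j i"
  shows "rows_lin_indep b m s R dd"
  unfolding rows_lin_indep_def
proof (intro conjI dd allI impI)
  fix c :: "nat \<Rightarrow> nat \<Rightarrow> nat" and j0 i0
  assume c: "\<forall>j<s. \<forall>i<dd j. c j i < b"
    and comb: "\<forall>l<m. (\<Sum>j<s. \<Sum>i<dd j. c j i * R j i l) mod b = 0"
    and j0: "j0 < s" and i0: "i0 < dd j0"
  have unit: "\<forall>j<s. \<forall>i<dd j. of_bool (j = j0 \<and> i = i0) < b" using b by simp
  obtain k where k: "\<forall>j<s. \<forall>i<dd j. digit_map b m (R j) k i = of_bool (j = j0 \<and> i = i0)"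
    using onto[OF unit] by blast
  have "[c j0 i0 = (\<Sum>j<s. \<Sum>i<dd j. c j i * digit_map b m (R j) k i)] (mod b)"
  proof -
    have "(\<Sum>j<s. \<Sum>i<dd j. c j i * digit_map b m (R j) k i) = (\<Sum>j<s. \<Sum>i<dd j. c j i * of_bool (j = j0 \<and> i = i0))"
      using k by (intro sum.cong) auto
    also have "\<dots> = (\<Sum>j<s. of_bool (j = j0) * c j0 i0)"
      using i0 by (intro sum.cong refl) (cases "j = j0"; simp)
    also have "\<dots> = c j0 i0" using j0 by simp
    finally show ?thesis by simp
  qed
  also have "[(\<Sum>j<s. \<Sum>i<dd j. c j i * digit_map b m (R j) k i)
      = (\<Sum>j<s. \<Sum>i<dd j. c j i * (\<Sum>l<m. R j i l * digit b k l))] (mod b)"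
    by (rule cong_sum cong_mult[OF cong_refl])+ (simp add: cong_def digit_map_def)
  also have "(\<Sum>j<s. \<Sum>i<dd j. c j i * (\<Sum>l<m. R j i l * digit b k l))
      = (\<Sum>j<s. \<Sum>i<dd j. \<Sum>l<m. digit b k l * (c j i * R j i l))"
    by (simp add: sum_distrib_left mult_ac)
  also have "\<dots> = (\<Sum>j<s. \<Sum>l<m. \<Sum>i<dd j. digit b k l * (c j i * R j i l))"
    by (rule sum.cong[OF refl], rule sum.swap)
  also have "\<dots> = (\<Sum>l<m. \<Sum>j<s. \<Sum>i<dd j. digit b k l * (c j i * R j i l))"
    by (rule sum.swap)
  also have "\<dots> = (\<Sum>l<m. digit b k l * (\<Sum>j<s. \<Sum>i<dd j. c j i * R j i l))"
    by (simp add: sum_distrib_left)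
  also have "[\<dots> = (\<Sum>l<m. digit b k l * ((\<Sum>j<s. \<Sum>i<dd j. c j i * R j i l) mod b))] (mod b)"
    by (rule cong_sum cong_mult[OF cong_refl])+ (simp add: cong_def)
  also have "(\<Sum>l<m. digit b k l * ((\<Sum>j<s. \<Sum>i<dd j. c j i * R j i l) mod b)) = 0"
    using comb by simp
  finally have "c j0 i0 mod b = 0" by (simp add: cong_def)
  then show "c j0 i0 = 0" using c j0 i0 by simp
qed

lemma rows_lin_indep_single_matrix:
  assumes indep: "rows_lin_indep b m s R (\<lambda>j. if j = j0 then d else 0)" and j0: "j0 < s"
    and c: "\<forall>i<d. c i < b" and comb: "\<forall>l<m. (\<Sum>i<d. c i * R j0 i l) mod b = 0"
  shows "\<forall>i<d. c i = 0"
proof (intro allI impI)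
  fix i assume i: "i < d"
  let ?c = "\<lambda>j i. if j = j0 then c i else 0"
  have "(\<Sum>j<s. \<Sum>i<(if j = j0 then d else 0). ?c j i * R j i l) = (\<Sum>i<d. c i * R j0 i l)" for l
  proof -
    have "(\<Sum>j<s. \<Sum>i<(if j = j0 then d else 0). ?c j i * R j i l)
        = (\<Sum>j<s. if j = j0 then (\<Sum>i<d. c i * R j0 i l) else 0)"
      by (intro sum.cong refl) simp
    then show ?thesis using j0 by simp
  qed
  moreover have "\<forall>j<s. \<forall>i<(if j = j0 then d else 0). ?c j i < b" using c by simp
  ultimately have "?c j0 i = 0"
    using indep[unfolded rows_lin_indep_def, THEN conjunct2, rule_format, of ?c j0 i] comb j0 i
    by simp
  then show "c i = 0" by simp
qed

text \<open>Pigeonhole: \<open>b\<^sup>d\<close> combinations of the rows but only \<open>b\<^sup>k\<^sup>0\<close> possible values.\<close>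
lemma rows_dependent_if_few_columns:
  fixes b :: nat and M :: "nat \<Rightarrow> nat \<Rightarrow> nat"
  assumes b: "2 \<le> b" and r: "r < d" and zero: "\<forall>i l. r \<le> l \<longrightarrow> M i l = 0"
  shows "\<exists>c. (\<forall>i<d. c i < b) \<and> (\<exists>i<d. c i \<noteq> 0) \<and> (\<forall>l. (\<Sum>i<d. c i * M i l) mod b = 0)"
proof -
  let ?v = "digit_map b d (\<lambda>l i. M i l)"
  define h where "h c' = from_digits b r (?v c')" for c'
  have h_less: "h c' < b ^ r" for c'
    unfolding h_def using b by (intro from_digits_less) (auto simp: digit_map_less)
  have "\<not> inj_on h {..<b ^ d}"
  proof
    assume "inj_on h {..<b ^ d}"
    then have "card {..<b ^ d} \<le> card {..<b ^ r}"
      using h_less by (intro card_inj_on_le) auto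
    moreover have "b ^ r < b ^ d" using b r by (intro power_strict_increasing) auto
    ultimately show False by simp
  qed
  then obtain c1 c2 where c12: "c1 < b ^ d" "c2 < b ^ d" "c1 \<noteq> c2" and "h c1 = h c2"
    unfolding inj_on_def by auto
  then have v: "?v c1 l = ?v c2 l" if "l < r" for l
    using digit_from_digits[OF b, of r "?v c1" l] digit_from_digits[OF b, of r "?v c2" l] that b
    by (simp add: h_def digit_map_less)
  have neg: "(x + (b - 1) * x) mod b = 0" for x
  proof -
    have "x + (b - 1) * x = x * b" using b by (cases b) auto
    then show ?thesis by simp
  qed
  define c where "c i = (digit b c1 i + (b - 1) * digit b c2 i) mod b" for i
  have "(\<Sum>i<d. c i * M i l) mod b = 0" for l
  proof (cases "l < r")
    case True
    let ?X = "\<Sum>i<d. M i l * digit b c1 i" and ?Y = "\<Sum>i<d. M i l * digit b c2 i"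
    have "[(\<Sum>i<d. c i * M i l) = (\<Sum>i<d. (digit b c1 i + (b - 1) * digit b c2 i) * M i l)] (mod b)"
      unfolding c_def by (intro cong_sum cong_mult cong_refl) (simp add: cong_def)
    also have "(\<Sum>i<d. (digit b c1 i + (b - 1) * digit b c2 i) * M i l) = ?X + (b - 1) * ?Y"
      by (simp add: sum.distrib sum_distrib_left distrib_left distrib_right mult_ac)
    also have "[?X + (b - 1) * ?Y = ?Y + (b - 1) * ?Y] (mod b)"
      using v[OF True] by (intro cong_add cong_refl) (simp add: digit_map_def cong_def)
    finally show ?thesis using neg by (simp add: cong_def)
  qed (use zero in simp)
  moreover obtain i where i: "i < d" "digit b c1 i \<noteq> digit b c2 i"
    using eq_if_digits_eq[OF c12(1,2)] c12(3) by blast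
  have "c i \<noteq> 0"
  proof
    assume "c i = 0"
    then have "(digit b c1 i + (b - 1) * digit b c2 i) mod b = (digit b c2 i + (b - 1) * digit b c2 i) mod b"
      using neg by (simp add: c_def)
    then show False using i(2) b mod_add_left_cancel_less digit_less by (metis not_numeral_le_zero neq0_conv)
  qed
  moreover have "\<forall>i<d. c i < b" using b by (simp add: c_def)
  ultimately show ?thesis using i(1) by blast
qed

lemma le_if_rows_lin_indep:
  assumes "0 < s" "\<forall>dd. (\<Sum>j<s. dd j) = d \<longrightarrow> rows_lin_indep b m s R dd"
  shows "d \<le> m"
proof -
  have "(\<Sum>j<s. if j = 0 then d else 0) = d" using assms(1) by simp
  then have "rows_lin_indep b m s R (\<lambda>j. if j = 0 then d else 0)" using assms(2) by blast
  then show ?thesis using assms(1) unfolding rows_lin_indep_def by auto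
qed

lemma le_lin_indep_param:
  assumes "0 < s" "\<forall>dd. (\<Sum>j<s. dd j) = d \<longrightarrow> rows_lin_indep b m s R dd"
  shows "d \<le> lin_indep_param b m s R"
proof -
  define P where "P = (\<lambda>d. \<forall>dd. (\<Sum>j<s. dd j) = d \<longrightarrow> rows_lin_indep b m s R dd)"
  have "P d" using assms(2) by (simp add: P_def)
  moreover have "y \<le> m" if "P y" for y using le_if_rows_lin_indep[OF assms(1)] that by (simp add: P_def)
  ultimately have "d \<le> Greatest P" by (rule Greatest_le_nat)
  then show ?thesis by (simp add: lin_indep_param_def P_def)
qed

lemma lin_indep_param_le:
  assumes s: "0 < s"
    and dep: "\<And>d'. d < d' \<Longrightarrow> d' \<le> m \<Longrightarrow> \<exists>dd. (\<Sum>j<s. dd j) = d' \<and> \<not> rows_lin_indep b m s R dd"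
  shows "lin_indep_param b m s R \<le> d"
proof -
  define P where "P = (\<lambda>d. \<forall>dd. (\<Sum>j<s. dd j) = d \<longrightarrow> rows_lin_indep b m s R dd)"
  have bound: "y \<le> m" if "P y" for y using le_if_rows_lin_indep[OF s] that by (simp add: P_def)
  have "P 0" by (simp add: P_def rows_lin_indep_def)
  then have P: "P (Greatest P)" using bound by (rule GreatestI_nat)
  have "Greatest P \<le> d"
  proof (rule ccontr)
    assume "\<not> Greatest P \<le> d"
    then have "d < Greatest P" by simp
    then obtain dd where "(\<Sum>j<s. dd j) = Greatest P" "\<not> rows_lin_indep b m s R dd"
      using dep bound[OF P] by blast
    then show False using P by (simp add: P_def)
  qed
  then show ?thesis by (simp add: lin_indep_param_def P_def)
qed

lemma net_coord_eq_radix_value: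
  "net_coord b m R j k = radix_value b (\<lambda>i. if i < m then digit_map b m (R j) k i else 0)"
proof -
  have "radix_value b (\<lambda>i. if i < m then digit_map b m (R j) k i else 0) =
      (\<Sum>i<m. real (if i < m then digit_map b m (R j) k i else 0) / real b ^ (i + 1))"
    unfolding radix_value_def by (rule suminf_finite) auto
  also have "\<dots> = (\<Sum>i<m. real (digit_map b m (R j) k i) / real b ^ (i + 1))" 
    by (intro sum.cong) auto
  finally show ?thesis unfolding net_coord_def digit_map_def by simp
qed

lemma net_coord_in_interval_iff:
  assumes b: "2 \<le> b" and d: "d \<le> m" and a: "a < b ^ d"
  shows "(real a / real b ^ d \<le> net_coord b m R j k \<and> net_coord b m R j k < real (a + 1) / real b ^ d)
           \<longleftrightarrow> (\<forall>i<d. digit_map b m (R j) k i = digit b a (d - 1 - i))"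
proof -
  define y where "y i = (if i < m then digit_map b m (R j) k i else 0)" for i
  have "\<forall>i. y i < b" using b by (simp add: y_def digit_map_less)
  moreover have "y m \<noteq> b - 1" using b by (simp add: y_def)
  ultimately have "(real a / real b ^ d \<le> radix_value b y \<and> radix_value b y < real (a + 1) / real b ^ d)
           \<longleftrightarrow> (\<forall>i<d. y i = digit b a (d - 1 - i))"
    using radix_value_in_interval_iff[OF b _ d _ a] by blast
  moreover have "(\<forall>i<d. y i = digit b a (d - 1 - i)) \<longleftrightarrow> (\<forall>i<d. digit_map b m (R j) k i = digit b a (d - 1 - i))"
    using d by (simp add: y_def)
  ultimately show ?thesis unfolding net_coord_eq_radix_value y_def by simp
qed

lemma card_funs_bounded_on:
  assumes "finite I"
  shows "card {f :: 'x \<Rightarrow> nat. \<forall>x. (x \<in> I \<longrightarrow> f x < b) \<and> (x \<notin> I \<longrightarrow> f x = 0)} = b ^ card I"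
proof -
  let ?h = "\<lambda>(f :: 'x \<Rightarrow> nat) x. if x \<in> I then f x else 0"
  have "{f :: 'x \<Rightarrow> nat. \<forall>x. (x \<in> I \<longrightarrow> f x < b) \<and> (x \<notin> I \<longrightarrow> f x = 0)} = ?h ` (PiE I (\<lambda>_. {..<b}))"
  proof
    show "?h ` (PiE I (\<lambda>_. {..<b})) \<subseteq> {f. \<forall>x. (x \<in> I \<longrightarrow> f x < b) \<and> (x \<notin> I \<longrightarrow> f x = 0)}"
      by (auto simp: PiE_iff)
    show "{f. \<forall>x. (x \<in> I \<longrightarrow> f x < b) \<and> (x \<notin> I \<longrightarrow> f x = 0)} \<subseteq> ?h ` (PiE I (\<lambda>_. {..<b}))"
    proof
      fix f assume f: "f \<in> {f. \<forall>x. (x \<in> I \<longrightarrow> f x < b) \<and> (x \<notin> I \<longrightarrow> f x = 0)}"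
      then have "restrict f I \<in> PiE I (\<lambda>_. {..<b})" by auto
      moreover have "f = ?h (restrict f I)" using f by (auto simp: fun_eq_iff)
      ultimately show "f \<in> ?h ` (PiE I (\<lambda>_. {..<b}))" by blast
    qed
  qed
  moreover have "inj_on ?h (PiE I (\<lambda>_. {..<b}))"
  proof (rule inj_onI)
    fix f g assume "f \<in> PiE I (\<lambda>_. {..<b})" "g \<in> PiE I (\<lambda>_. {..<b})" and "?h f = ?h g"
    then show "f = g" by (metis (mono_tags, lifting) PiE_ext)
  qed
  ultimately show ?thesis using assms by (simp add: card_image card_PiE)
qed

lemma card_digit_map_fiber_if_onto:
  fixes A :: "'x \<Rightarrow> nat \<Rightarrow> nat"
  assumes b: "2 \<le> b" and I: "finite I" and zero: "\<And>x l. x \<notin> I \<Longrightarrow> A x l = 0"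
    and onto: "\<And>z. \<forall>x\<in>I. z x < b \<Longrightarrow> \<exists>k<b ^ L. \<forall>x\<in>I. digit_map b L A k x = z x"
    and z: "\<forall>x\<in>I. z x < b"
  shows "b ^ card I * card {k. k < b ^ L \<and> (\<forall>x\<in>I. digit_map b L A k x = z x)} = b ^ L"
proof -
  define Z where "Z = {f :: 'x \<Rightarrow> nat. \<forall>x. (x \<in> I \<longrightarrow> f x < b) \<and> (x \<notin> I \<longrightarrow> f x = 0)}"
  have outside: "digit_map b L A k x = 0" if "x \<notin> I" for k x
    using zero[OF that] by (simp add: digit_map_def)
  have "digit_map b L A ` {..<b ^ L} = Z"
  proof
    show "digit_map b L A ` {..<b ^ L} \<subseteq> Z" using b outside by (auto simp: Z_def digit_map_less)
    show "Z \<subseteq> digit_map b L A ` {..<b ^ L}"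
    proof
      fix f assume f: "f \<in> Z"
      then obtain k where "k < b ^ L" "\<forall>x\<in>I. digit_map b L A k x = f x"
        using onto[of f] by (auto simp: Z_def)
      moreover have "digit_map b L A k = f" if "\<forall>x\<in>I. digit_map b L A k x = f x" for k
        using that f outside by (auto simp: Z_def fun_eq_iff)
      ultimately show "f \<in> digit_map b L A ` {..<b ^ L}" by blast
    qed
  qed
  moreover obtain k1 where k1: "k1 < b ^ L" "\<forall>x\<in>I. digit_map b L A k1 x = z x" using onto[OF z] by blast
  moreover have "digit_map b L A k = digit_map b L A k1 \<longleftrightarrow> (\<forall>x\<in>I. digit_map b L A k x = z x)" for k
  proof
    assume "\<forall>x\<in>I. digit_map b L A k x = z x"
    then show "digit_map b L A k = digit_map b L A k1"
      using k1(2) outside by (metis ext)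
  qed (use k1(2) in auto)
  then have "{k. k < b ^ L \<and> (\<forall>x\<in>I. digit_map b L A k x = z x)}
      = {k. k < b ^ L \<and> digit_map b L A k = digit_map b L A k1}" by blast
  ultimately show ?thesis
    using card_image_mult_card_fiber[OF b k1(1), of A] card_funs_bounded_on[OF I, of b]
    by (simp add: Z_def)
qed

lemma digit_map_reduced:
  assumes s: "0 < s" and j: "j < s"
    and wr_mono: "\<forall>i j. i \<le> j \<longrightarrow> j < s \<longrightarrow> wr i \<le> wr j"
    and wc_mono: "\<forall>i j. i \<le> j \<longrightarrow> j < s \<longrightarrow> wc i \<le> wc j"
    and i: "i < m - max (wc (s - 1) + t) (wr (s - 1))" and k: "k < b ^ (m - wc (s - 1))" and b: "0 < b"
  shows "digit_map b m (reduced m wr wc C j) k i = digit_map b (m - wc (s - 1)) (C j) k i"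
proof -
  let ?M = "m - wc (s - 1)"
  have "wr j \<le> wr (s - 1)" "wc j \<le> wc (s - 1)" using j wr_mono wc_mono by auto
  then have rows: "i < m - min m (wr j)" and cols: "l < m - min m (wc j)" if "l < ?M" for l
    using i that by auto
  have "(\<Sum>l<m. reduced m wr wc C j i l * digit b k l) = (\<Sum>l<?M. reduced m wr wc C j i l * digit b k l)"
    using digit_eq_0_if_less_power[OF b k] by (intro sum.mono_neutral_right) auto
  also have "\<dots> = (\<Sum>l<?M. C j i l * digit b k l)"
    using rows cols by (intro sum.cong) (auto simp: reduced_def)
  finally show ?thesis by (simp add: digit_map_def)
qed

lemma not_rows_lin_indep_reduced:
  assumes s: "0 < s" and b: "2 \<le> b" and d: "m - max (wc (s - 1)) (wr (s - 1)) < d" "d \<le> m"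
  shows "\<not> rows_lin_indep b m s (reduced m wr wc C) (\<lambda>j. if j = s - 1 then d else 0)"
proof
  let ?R = "reduced m wr wc C (s - 1)"
  assume indep: "rows_lin_indep b m s (reduced m wr wc C) (\<lambda>j. if j = s - 1 then d else 0)"
  obtain c where c: "\<forall>i<d. c i < b" "\<exists>i<d. c i \<noteq> 0" "\<forall>l. (\<Sum>i<d. c i * ?R i l) mod b = 0"
  proof (cases "wc (s - 1) \<le> wr (s - 1)")
    case True
    then have "\<not> d - 1 < m - min m (wr (s - 1))" using d by linarith
    then have "?R (d - 1) l = 0" for l by (simp add: reduced_def)
    moreover have "(\<Sum>i<d. of_bool (i = d - 1) * ?R i l) = ?R (d - 1) l" for l
    proof -
      have "{..<d} \<inter> {i. i = d - 1} = {d - 1}" using d by auto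
      then show ?thesis by (simp add: mult.commute)
    qed
    moreover have "d - 1 < d" using d by linarith
    ultimately show ?thesis using that[of "\<lambda>i. of_bool (i = d - 1)"] b by simp
  next
    case False
    then have "m - min m (wc (s - 1)) < d" using d(1) by simp
    moreover have "\<forall>i l. m - min m (wc (s - 1)) \<le> l \<longrightarrow> ?R i l = 0" by (simp add: reduced_def)
    ultimately show ?thesis
      using that rows_dependent_if_few_columns[where M = "reduced m wr wc C (s - 1)" and r = "m - min m (wc (s - 1))", OF b]
      by blast
  qed
  have "s - 1 < s" using s by simp
  then have "\<forall>i<d. c i = 0" using rows_lin_indep_single_matrix[OF indep _ c(1)] c(3) by blast
  moreover obtain i where "i < d" "c i \<noteq> 0" using c(2) by blast
  ultimately show False by simp
qed

context
  fixes b s m t :: nat and C :: "nat \<Rightarrow> nat \<Rightarrow> nat \<Rightarrow> nat" and wr wc :: "nat \<Rightarrow> nat"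
  assumes p: "prime b" and s: "0 < s" and ds: "is_digital_seq b t s C"
    and wr_mono: "\<forall>i j. i \<le> j \<longrightarrow> j < s \<longrightarrow> wr i \<le> wr j"
    and wc_mono: "\<forall>i j. i \<le> j \<longrightarrow> j < s \<longrightarrow> wc i \<le> wc j"
begin

lemma reduced_prescribed_digits:
  assumes sum_dd: "(\<Sum>j<s. dd j) \<le> m - max (wc (s - 1) + t) (wr (s - 1))"
    and z: "\<forall>j<s. \<forall>i<dd j. z j i < b"
  shows "\<exists>k<b ^ m. \<forall>j<s. \<forall>i<dd j. digit_map b m (reduced m wr wc C j) k i = z j i"
proof -
  let ?W = "max (wc (s - 1) + t) (wr (s - 1))" and ?M = "m - wc (s - 1)"
  have b: "2 \<le> b" using p prime_ge_2_nat by blast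
  have dd: "dd j \<le> m - ?W" if "j < s" for j
    using that sum_dd member_le_sum[of j "{..<s}" dd] by simp
  show ?thesis
  proof (cases "?W < m")
    case True
    have "wc (s - 1) + t < m" using True by simp
    then have "t \<le> ?M" by linarith
    moreover have "(\<Sum>j<s. dd j) \<le> ?M - t" using sum_dd by simp
    ultimately obtain k where k: "k < b ^ ?M" and kz: "\<forall>j<s. \<forall>i<dd j. digit_map b ?M (C j) k i = z j i"
      using digital_seq_prescribed_digits[OF p ds _ _ z] by blast
    moreover have "b ^ ?M \<le> b ^ m" using b by (intro power_increasing) auto
    moreover have "digit_map b m (reduced m wr wc C j) k i = digit_map b ?M (C j) k i"
      if "j < s" "i < dd j" for j i
      using digit_map_reduced[where t = t and C = C, OF s that(1) wr_mono wc_mono _ k] dd[OF that(1)] that(2) b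
      by simp
    ultimately show ?thesis by (metis order_less_le_trans)
  next
    case False
    then have "\<forall>j<s. dd j = 0" using dd by fastforce
    then show ?thesis using b by (intro exI[of _ 0]) simp
  qed
qed

lemma rows_lin_indep_reduced:
  assumes "(\<Sum>j<s. dd j) = m - max (wc (s - 1) + t) (wr (s - 1))"
  shows "rows_lin_indep b m s (reduced m wr wc C) dd"
proof (rule rows_lin_indep_if_onto)
  show "2 \<le> b" using p prime_ge_2_nat by blast
  show "\<forall>j<s. dd j \<le> m" using assms member_le_sum[of _ "{..<s}" dd] by fastforce
  show "\<exists>k. \<forall>j<s. \<forall>i<dd j. digit_map b m (reduced m wr wc C j) k i = z j i"
    if "\<forall>j<s. \<forall>i<dd j. z j i < b" for z
    using reduced_prescribed_digits[OF _ that] assms by auto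
qed

lemma is_net_reduced:
  "is_net b (min m (max (wc (s - 1) + t) (wr (s - 1)))) m s (\<lambda>k j. net_coord b m (reduced m wr wc C) j k)"
  unfolding is_net_def
proof (intro conjI allI impI)
  let ?T = "min m (max (wc (s - 1) + t) (wr (s - 1)))" and ?R = "reduced m wr wc C"
  have b: "2 \<le> b" using p prime_ge_2_nat by blast
  show "?T \<le> m" by simp
  fix d a :: "nat \<Rightarrow> nat"
  assume sum_d: "(\<Sum>j<s. d j) = m - ?T" and a: "\<forall>j<s. a j < b ^ d j"
  define I where "I = Sigma {..<s} (\<lambda>j. {..<d j})"
  define A where "A x l = (if x \<in> I then ?R (fst x) (snd x) l else 0)" for x l
  define z where "z x = digit b (a (fst x)) (d (fst x) - 1 - snd x)" for x
  have d_le: "d j \<le> m" if "j < s" for j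
  proof -
    have "d j \<le> (\<Sum>j<s. d j)" using that by (intro member_le_sum) auto
    with sum_d show ?thesis by linarith
  qed
  have A: "digit_map b m A k (j, i) = digit_map b m (?R j) k i" if "(j, i) \<in> I" for j i k
    using that by (simp add: A_def digit_map_def)
  have interval_iff: "(\<forall>j<s. real (a j) / real b ^ d j \<le> net_coord b m ?R j k \<and>
                                 net_coord b m ?R j k < real (a j + 1) / real b ^ d j)
      \<longleftrightarrow> (\<forall>x\<in>I. digit_map b m A k x = z x)" for k
  proof -
    have "(real (a j) / real b ^ d j \<le> net_coord b m ?R j k \<and>
             net_coord b m ?R j k < real (a j + 1) / real b ^ d j)
        \<longleftrightarrow> (\<forall>i<d j. digit_map b m (?R j) k i = z (j, i))" if "j < s" for j
      using net_coord_in_interval_iff[OF b d_le[OF that] a[rule_format, OF that]] by (simp add: z_def)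
    then show ?thesis by (auto simp: I_def A)
  qed
  have onto: "\<exists>k<b ^ m. \<forall>x\<in>I. digit_map b m A k x = z' x" if "\<forall>x\<in>I. z' x < b" for z'
  proof -
    have "(\<Sum>j<s. d j) \<le> m - max (wc (s - 1) + t) (wr (s - 1))" using sum_d by (auto simp: min_def)
    moreover have "\<forall>j<s. \<forall>i<d j. z' (j, i) < b" using that by (simp add: I_def)
    ultimately obtain k where "k < b ^ m" "\<forall>j<s. \<forall>i<d j. digit_map b m (?R j) k i = z' (j, i)"
      using reduced_prescribed_digits[of d "\<lambda>j i. z' (j, i)"] by auto
    then show ?thesis using A by (auto simp: I_def)
  qed
  let ?S = "{k. k < b ^ m \<and> (\<forall>x\<in>I. digit_map b m A k x = z x)}"
  have fiber: "b ^ card I * card ?S = b ^ m"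
  proof (rule card_digit_map_fiber_if_onto[OF b _ _ onto])
    show "finite I" by (simp add: I_def)
    show "A x l = 0" if "x \<notin> I" for x l using that by (simp add: A_def)
    show "\<forall>x\<in>I. z x < b" using b by (simp add: z_def digit_less)
  qed
  have "card I = m - ?T" using sum_d by (simp add: I_def)
  moreover have "b ^ (m - ?T) * b ^ ?T = b ^ m"
    using power_add[of b "m - ?T" ?T] by simp
  ultimately have "b ^ (m - ?T) * card ?S = b ^ (m - ?T) * b ^ ?T" using fiber by (simp only:)
  then have "card ?S = b ^ ?T" using b by simp
  moreover have "{k. k < b ^ m \<and> (\<forall>j<s. real (a j) / real b ^ d j \<le> net_coord b m ?R j k \<and>
                                   net_coord b m ?R j k < real (a j + 1) / real b ^ d j)} = ?S"
    using interval_iff by blast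
  ultimately show "card {k. k < b ^ m \<and> (\<forall>j<s. real (a j) / real b ^ d j \<le> net_coord b m ?R j k \<and>
                                   net_coord b m ?R j k < real (a j + 1) / real b ^ d j)} = b ^ ?T"
    by simp
qed

end

theorem mainTheorem4:
  fixes b s m t :: nat and C :: "nat \<Rightarrow> nat \<Rightarrow> nat \<Rightarrow> nat" and wr wc :: "nat \<Rightarrow> nat"
  assumes "prime b" and "1 \<le> s" and "1 \<le> m"
    and "is_digital_seq b t s C" and "t \<le> m"
    and "wr 0 = 0" and "\<forall>i j. i \<le> j \<longrightarrow> j < s \<longrightarrow> wr i \<le> wr j"
    and "wc 0 = 0" and "\<forall>i j. i \<le> j \<longrightarrow> j < s \<longrightarrow> wc i \<le> wc j"
  shows "max 0 (int m - int (max (wc (s - 1) + t) (wr (s - 1))))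
           \<le> int (lin_indep_param b m s (reduced m wr wc C))
       \<and> int (lin_indep_param b m s (reduced m wr wc C))
           \<le> max 0 (int m - int (max (wc (s - 1)) (wr (s - 1))))
       \<and> min_quality b m s (reduced m wr wc C) \<le> min m (max (wc (s - 1) + t) (wr (s - 1)))"
proof -
  have s: "0 < s" using assms(2) by simp
  note seq = assms(1) s assms(4,7,9)
  have b: "2 \<le> b" using assms(1) prime_ge_2_nat by blast
  let ?R = "reduced m wr wc C"
  have "m - max (wc (s - 1) + t) (wr (s - 1)) \<le> lin_indep_param b m s ?R"
    using rows_lin_indep_reduced[OF seq] by (intro le_lin_indep_param[OF s]) blast
  moreover have "lin_indep_param b m s ?R \<le> m - max (wc (s - 1)) (wr (s - 1))"
  proof (rule lin_indep_param_le[OF s])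
    fix d assume "m - max (wc (s - 1)) (wr (s - 1)) < d" "d \<le> m"
    then show "\<exists>dd. (\<Sum>j<s. dd j) = d \<and> \<not> rows_lin_indep b m s ?R dd"
      using not_rows_lin_indep_reduced[OF s b] s by (intro exI[of _ "\<lambda>j. if j = s - 1 then d else 0"]) simp
  qed
  moreover have "min_quality b m s ?R \<le> min m (max (wc (s - 1) + t) (wr (s - 1)))"
    unfolding min_quality_def by (rule Least_le) (rule is_net_reduced[OF seq])
  moreover have "max 0 (int x - int y) = int (x - y)" for x y :: nat
    by (cases "y \<le> x") (simp_all add: of_nat_diff)
  ultimately show ?thesis by simp
qed

end
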